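(* Let $M=(m_i)$, $N=(n_i)$ satisfy conditions (i) and (ii) below and let $p_k=5n_1+\sum_{1\le i<k}s_in_{2i}$ for $k\ge1$. Let $k\ge1$, $a\in\mathbb N\cup\{0\}$ and let $a_1,\dots,a_{k-1}$ be non-negative integers such that $m_1^{a}\prod_{1\le i<k}m_{2i}^{a_i}<m_{2k}$. Then $an_1+\sum_{1\le i<k}a_in_{2i}<p_k$.
   Context: $M=(m_i)$, $N=(n_i)$ are increasing sequences of positive integers such that (i) $m_1>3$, $m_2=m_1^5$, $m_{2j+1}=m_{2j}^5$ for $j\ge1$, and there is an increasing sequence $(s_i)$ of positive integers with $m_{2j}=\prod_{i=1}^{j-1}m_{2i}^{s_i}$ for $j\ge2$; (ii) defining for $j\ge2$ $f_j=\max\{\rho n_1+\sum_{1\le i<j}\rho_in_{2i}:\ \rho,\rho_i\in\mathbb N\cup\{0\},\ m_1^{\rho}\prod_{1\le i<j}m_{2i}^{\rho_i}<m_{2j}\}$, one has $4f_j<n_{2j}$ for all $j\ge2$, and $5n_1<n_2$. *)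

theory Defs
  imports Main
begin

text \<open>Sequences are indexed from 1; values at index 0 are irrelevant.
  f_j: maximum of rho*n_1 + sum_{1<=i<j} rho_i * n_{2i} over all non-negative
  integers rho, rho_i with m_1^rho * prod_{1<=i<j} m_{2i}^rho_i < m_{2j}.\<close>

definition fseq :: "(nat \<Rightarrow> nat) \<Rightarrow> (nat \<Rightarrow> nat) \<Rightarrow> nat \<Rightarrow> nat" where
  "fseq m n j = Max {\<rho> * n 1 + (\<Sum>i\<in>{1..<j}. r i * n (2*i)) | \<rho> r.
       m 1 ^ \<rho> * (\<Prod>i\<in>{1..<j}. m (2*i) ^ r i) < m (2*j)}"

definition pseq :: "(nat \<Rightarrow> nat) \<Rightarrow> (nat \<Rightarrow> nat) \<Rightarrow> nat \<Rightarrow> nat" where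
  "pseq n s k = 5 * n 1 + (\<Sum>i\<in>{1..<k}. s i * n (2*i))"

end

theory Submission
  imports Defs
begin

text \<open>
  Write B(k) = m(2k).  The hypotheses make the even-indexed terms of m a chain of
  powers: B(1) = m(1)^5 and B(k+1) = B(k)^c(k), where c(1) = s(1) and c(k) = s(k) + 1
  for k >= 2.  Comparing f(k+1) with two admissible single-index tuples, the
  condition 4 f(k+1) < n(2k+2) yields the growth c(k) n(2k) <= n(2k+2).
  From these abstract facts alone we prove, by induction on k, the strengthening:
  for every r >= 1, if m(1)^a * prod B(i)^a(i) < B(k)^r, then
  a n(1) + sum a(i) n(2i) + n(2k) < p(k) + r n(2k).
  In the induction step the factor B(k)^a(k) is split off the product, which reduces
  the claim to level k with exponent c(k) r - a(k).
\<close>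

lemma exponent_lt_of_power_le:
  fixes b e x :: nat
  assumes "2 \<le> b" and "b ^ e \<le> x"
  shows "e < x"
proof -
  have "e < 2 ^ e" by (rule less_exp)
  also have "\<dots> \<le> b ^ e" using assms(1) by (rule power_mono) simp
  finally show ?thesis using assms(2) by linarith
qed

lemma split_power_factor:
  fixes B P t e :: nat
  assumes "2 \<le> B" and "0 < P" and "P * B ^ t < B ^ e"
  shows "t < e" and "P < B ^ (e - t)"
proof -
  have "B ^ t \<le> P * B ^ t" using assms(2) by simp
  then have "B ^ t < B ^ e" using assms(3) by linarith
  then show te: "t < e" using assms(1) by (simp add: power_strict_increasing_iff)
  have "P * B ^ t < B ^ (e - t) * B ^ t" using assms(3) te by (simp add: power_add[symmetric])
  then show "P < B ^ (e - t)" by simp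
qed

text \<open>Every admissible exponent tuple contributes a value at most \<open>fseq m n j\<close>;
  the admissible values form a finite set because each exponent is below \<open>m(2j)\<close>.\<close>
lemma fseq_ge:
  fixes m n r :: "nat \<Rightarrow> nat"
  assumes m_ge2: "\<forall>i\<ge>1. 2 \<le> m i"
    and cond: "m 1 ^ \<rho> * (\<Prod>i\<in>{1..<j}. m (2*i) ^ r i) < m (2*j)"
  shows "\<rho> * n 1 + (\<Sum>i\<in>{1..<j}. r i * n (2*i)) \<le> fseq m n j"
proof -
  let ?S = "{\<rho> * n 1 + (\<Sum>i\<in>{1..<j}. r i * n (2*i)) | \<rho> r.
       m 1 ^ \<rho> * (\<Prod>i\<in>{1..<j}. m (2*i) ^ r i) < m (2*j)}"
  let ?B = "m (2*j) * n 1 + (\<Sum>i\<in>{1..<j}. m (2*j) * n (2*i))"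
  have bounded: "x \<le> ?B" if "x \<in> ?S" for x
  proof -
    from that obtain \<rho>' r' where x: "x = \<rho>' * n 1 + (\<Sum>i\<in>{1..<j}. r' i * n (2*i))"
      and c: "m 1 ^ \<rho>' * (\<Prod>i\<in>{1..<j}. m (2*i) ^ r' i) < m (2*j)" by blast
    have m1: "2 \<le> m 1" using m_ge2 by simp
    have "0 < m (2*i)" if "1 \<le> i" for i using m_ge2[rule_format, of "2*i"] that by simp
    then have prod_pos: "0 < (\<Prod>i\<in>{1..<j}. m (2*i) ^ r' i)" by (intro prod_pos) auto
    have "m 1 ^ \<rho>' \<le> m 1 ^ \<rho>' * (\<Prod>i\<in>{1..<j}. m (2*i) ^ r' i)"
      using prod_pos by (metis One_nat_def Suc_leI mult.right_neutral mult_le_mono2)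
    then have "m 1 ^ \<rho>' \<le> m (2*j)" using c by linarith
    then have \<rho>_lt: "\<rho>' < m (2*j)" by (rule exponent_lt_of_power_le[OF m1])
    have r_lt: "r' i < m (2*j)" if i: "i \<in> {1..<j}" for i
    proof -
      have "m (2*i) ^ r' i \<le> (\<Prod>i\<in>{1..<j}. m (2*i) ^ r' i)"
        using prod_pos i by (intro dvd_imp_le) (auto intro: dvd_prodI)
      also have "\<dots> \<le> m 1 ^ \<rho>' * (\<Prod>i\<in>{1..<j}. m (2*i) ^ r' i)" using m1 by simp
      finally have "m (2*i) ^ r' i \<le> m (2*j)" using c by linarith
      moreover have "2 \<le> m (2*i)" using m_ge2 i by simp
      ultimately show ?thesis by (intro exponent_lt_of_power_le)
    qed
    have "\<rho>' * n 1 \<le> m (2*j) * n 1" using \<rho>_lt by simp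
    moreover have "(\<Sum>i\<in>{1..<j}. r' i * n (2*i)) \<le> (\<Sum>i\<in>{1..<j}. m (2*j) * n (2*i))"
      using r_lt by (intro sum_mono) (simp add: less_imp_le)
    ultimately show ?thesis using x by linarith
  qed
  have "finite ?S" by (rule finite_subset[of _ "{..?B}"]) (use bounded in auto)
  moreover have "\<rho> * n 1 + (\<Sum>i\<in>{1..<j}. r i * n (2*i)) \<in> ?S" using cond by blast
  ultimately show ?thesis unfolding fseq_def by (intro Max_ge)
qed

lemma fseq_ge_single:
  fixes m n :: "nat \<Rightarrow> nat"
  assumes m_ge2: "\<forall>i\<ge>1. 2 \<le> m i" and k: "k \<ge> 1"
    and cond: "m (2*k) ^ e < m (2 * Suc k)"
  shows "e * n (2*k) \<le> fseq m n (Suc k)"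
proof -
  let ?r = "\<lambda>i. if i = k then e else 0"
  have "(\<Prod>i\<in>{1..<Suc k}. m (2*i) ^ ?r i) = m (2*k) ^ e"
    using k by (simp add: prod.atLeastLessThan_Suc)
  moreover have "(\<Sum>i\<in>{1..<Suc k}. ?r i * n (2*i)) = e * n (2*k)"
    using k by (simp add: sum.atLeastLessThan_Suc)
  ultimately show ?thesis
    using fseq_ge[OF m_ge2, where \<rho> = 0 and j = "Suc k" and r = ?r and n = n] cond by simp
qed

lemma weighted_sum_bound:
  fixes m n s c av :: "nat \<Rightarrow> nat" and k a r :: nat
  assumes m_ge2: "\<forall>i\<ge>1. 2 \<le> m i" and n1_pos: "0 < n 1"
    and m2: "m 2 = m 1 ^ 5" and n12: "5 * n 1 < n 2"
    and m_chain: "\<And>j. j \<ge> 1 \<Longrightarrow> m (2 * Suc j) = m (2*j) ^ c j"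
    and c_pos: "\<And>j. j \<ge> 1 \<Longrightarrow> 1 \<le> c j"
    and c_le: "\<And>j. j \<ge> 1 \<Longrightarrow> c j \<le> s j + 1"
    and n_growth: "\<And>j. j \<ge> 1 \<Longrightarrow> c j * n (2*j) \<le> n (2 * Suc j)"
    and k: "k \<ge> 1" and r: "r \<ge> 1"
    and small: "m 1 ^ a * (\<Prod>i\<in>{1..<k}. m (2*i) ^ av i) < m (2*k) ^ r"
  shows "a * n 1 + (\<Sum>i\<in>{1..<k}. av i * n (2*i)) + n (2*k) < pseq n s k + r * n (2*k)"
  using k r small
proof (induction k arbitrary: r a av rule: nat_induct_at_least)
  case base
  have "m 1 ^ a < m 1 ^ (5*r)" using base.prems m2 by (simp add: power_mult)
  then have "a < 5*r" using m_ge2[rule_format, of 1] by simp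
  then have "a * n 1 + n 1 \<le> 5 * r * n 1"
    using mult_le_mono1[of "Suc a" "5*r" "n 1"] by simp
  moreover have "(r - 1) * (5 * n 1) \<le> (r - 1) * n 2" using n12 by (intro mult_le_mono2) simp
  moreover have "5 * r * n 1 = 5 * n 1 + (r - 1) * (5 * n 1)"
    using base.prems(1) by (cases r) (simp_all add: algebra_simps)
  moreover have "r * n 2 = n 2 + (r - 1) * n 2"
    using base.prems(1) by (cases r) (simp_all add: algebra_simps)
  ultimately have "a * n 1 + n 2 < 5 * n 1 + r * n 2" using n1_pos by linarith
  then show ?case unfolding pseq_def by simp
next
  case (Suc k)
  define P where "P = m 1 ^ a * (\<Prod>i\<in>{1..<k}. m (2*i) ^ av i)"
  define t where "t = av k"
  have B2: "2 \<le> m (2*k)" using m_ge2 Suc.hyps by simp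
  have "0 < m i" if "1 \<le> i" for i using m_ge2[rule_format, OF that] by simp
  then have "0 < P" unfolding P_def by (intro mult_pos_pos prod_pos) auto
  moreover have "P * m (2*k) ^ t < m (2*k) ^ (c k * r)"
    using Suc.prems(2) Suc.hyps m_chain[of k] unfolding P_def t_def
    by (simp add: prod.atLeastLessThan_Suc power_mult mult.assoc)
  ultimately have t_lt: "t < c k * r" and P_lt: "P < m (2*k) ^ (c k * r - t)"
    using split_power_factor[OF B2] by blast+
  have "1 \<le> c k * r - t" using t_lt by simp
  from Suc.IH[OF this P_lt[unfolded P_def]]
  have IH: "a * n 1 + (\<Sum>i\<in>{1..<k}. av i * n (2*i)) + n (2*k)
      < pseq n s k + (c k * r - t) * n (2*k)" .
  \<comment> \<open>the budget \<open>c k * r * n(2k)\<close> is paid by \<open>(s k + 1) n(2k)\<close> and \<open>(r - 1) n(2k+2)\<close>\<close>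
  have "(c k * r - t) * n (2*k) + t * n (2*k) = c k * r * n (2*k)"
    using t_lt by (simp add: add_mult_distrib[symmetric])
  moreover have "c k * r * n (2*k) = c k * n (2*k) + (r - 1) * (c k * n (2*k))"
    using Suc.prems(1) by (cases r) (simp_all add: algebra_simps)
  moreover have "(r - 1) * (c k * n (2*k)) \<le> (r - 1) * n (2 * Suc k)"
    using n_growth[OF Suc.hyps] by simp
  moreover have "c k * n (2*k) \<le> s k * n (2*k) + n (2*k)"
    using c_le[OF Suc.hyps] by (metis add_mult_distrib mult_1 mult_le_mono1)
  moreover have "r * n (2 * Suc k) = n (2 * Suc k) + (r - 1) * n (2 * Suc k)"
    using Suc.prems(1) by (cases r) (simp_all add: algebra_simps)
  moreover have "pseq n s (Suc k) = pseq n s k + s k * n (2*k)"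
    unfolding pseq_def using Suc.hyps by (simp add: sum.atLeastLessThan_Suc)
  moreover have "(\<Sum>i\<in>{1..<Suc k}. av i * n (2*i))
      = (\<Sum>i\<in>{1..<k}. av i * n (2*i)) + t * n (2*k)"
    using Suc.hyps unfolding t_def by (simp add: sum.atLeastLessThan_Suc)
  ultimately show ?case using IH by linarith
qed

definition chain_exp :: "(nat \<Rightarrow> nat) \<Rightarrow> nat \<Rightarrow> nat" where
  "chain_exp s k = (if k = 1 then s 1 else s k + 1)"

lemma inc_seq_ge2:
  fixes m :: "nat \<Rightarrow> nat"
  assumes m_inc: "\<forall>i\<ge>1. m i < m (Suc i)" and m1: "2 \<le> m 1" and i: "i \<ge> 1"
  shows "2 \<le> m i"
  using i
proof (induction i rule: nat_induct_at_least)
  case (Suc i) then show ?case using m_inc by (metis le_trans less_imp_le)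
qed (use m1 in simp)

text \<open>By the recursive definition of \<open>m(2j)\<close> as a product over \<open>i < j\<close>, each even term is a power
  of the previous one: \<open>m(4) = m(2)^s(1)\<close> and \<open>m(2k+2) = m(2k) * m(2k)^s(k)\<close> for \<open>k \<ge> 2\<close>.\<close>
lemma m_even_chain:
  fixes m s :: "nat \<Rightarrow> nat"
  assumes m_even: "\<forall>j\<ge>2. m (2*j) = (\<Prod>i\<in>{1..<j}. m (2*i) ^ s i)" and k: "k \<ge> 1"
  shows "m (2 * Suc k) = m (2*k) ^ chain_exp s k"
proof -
  have "m (2 * Suc k) = (\<Prod>i\<in>{1..<k}. m (2*i) ^ s i) * m (2*k) ^ s k"
    using m_even[rule_format, of "Suc k"] k by (simp add: prod.atLeastLessThan_Suc)
  moreover have "(\<Prod>i\<in>{1..<k}. m (2*i) ^ s i) = m (2*k)" if "k \<noteq> 1"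
    using m_even k that by simp
  ultimately show ?thesis by (simp add: chain_exp_def)
qed

text \<open>The growth condition on \<open>n\<close>: both \<open>(c - 1) n(2k)\<close> and \<open>n(2k)\<close> are admissible
  values at level \<open>k+1\<close>, so \<open>c n(2k) \<le> 2 fseq m n (k+1) < n(2k+2)\<close>.\<close>
lemma n_growth:
  fixes m n :: "nat \<Rightarrow> nat"
  assumes m_ge2: "\<forall>i\<ge>1. 2 \<le> m i" and m_inc: "\<forall>i\<ge>1. m i < m (Suc i)"
    and f_cond: "4 * fseq m n (Suc k) < n (2 * Suc k)"
    and chain: "m (2 * Suc k) = m (2*k) ^ c" and c: "1 \<le> c" and k: "k \<ge> 1"
  shows "c * n (2*k) \<le> n (2 * Suc k)"
proof -
  have "m (2*k) ^ (c - 1) < m (2 * Suc k)"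
    using chain c m_ge2[rule_format, of "2*k"] k by (simp add: power_strict_increasing_iff)
  then have pred_le: "(c - 1) * n (2*k) \<le> fseq m n (Suc k)"
    by (rule fseq_ge_single[OF m_ge2 k])
  have "m (2*k) ^ 1 < m (2 * Suc k)"
    using m_inc k less_trans[of "m (2*k)" "m (Suc (2*k))"] by simp
  then have one_le: "1 * n (2*k) \<le> fseq m n (Suc k)"
    by (rule fseq_ge_single[OF m_ge2 k])
  have "c * n (2*k) = (c - 1) * n (2*k) + n (2*k)"
    using c by (cases c) (simp_all add: algebra_simps)
  with pred_le one_le f_cond show ?thesis by linarith
qed

theorem mainTheorem6:
  fixes m n s :: "nat \<Rightarrow> nat" and k a :: nat and av :: "nat \<Rightarrow> nat"
  assumes m_pos: "\<forall>i\<ge>1. 0 < m i" and m_inc: "\<forall>i\<ge>1. m i < m (Suc i)"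
    and n_pos: "\<forall>i\<ge>1. 0 < n i" and n_inc: "\<forall>i\<ge>1. n i < n (Suc i)"
    and s_pos: "\<forall>i\<ge>1. 0 < s i" and s_inc: "\<forall>i\<ge>1. s i < s (Suc i)"
    and m1: "m 1 > 3" and m2: "m 2 = m 1 ^ 5"
    and m_odd: "\<forall>j\<ge>1. m (2*j+1) = m (2*j) ^ 5"
    and m_even: "\<forall>j\<ge>2. m (2*j) = (\<Prod>i\<in>{1..<j}. m (2*i) ^ s i)"
    and f_cond: "\<forall>j\<ge>2. 4 * fseq m n j < n (2*j)"
    and n12: "5 * n 1 < n 2"
    and k: "k \<ge> 1"
    and small: "m 1 ^ a * (\<Prod>i\<in>{1..<k}. m (2*i) ^ av i) < m (2*k)"
  shows "a * n 1 + (\<Sum>i\<in>{1..<k}. av i * n (2*i)) < pseq n s k"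
proof -
  have m_ge2: "\<forall>i\<ge>1. 2 \<le> m i" using inc_seq_ge2[OF m_inc] m1 by simp
  have chain: "m (2 * Suc j) = m (2*j) ^ chain_exp s j" if "j \<ge> 1" for j
    using m_even_chain[OF m_even that] .
  have c_pos: "1 \<le> chain_exp s j" if "j \<ge> 1" for j
    using s_pos that by (simp add: chain_exp_def Suc_leI)
  have growth: "chain_exp s j * n (2*j) \<le> n (2 * Suc j)" if j: "j \<ge> 1" for j
    using f_cond[rule_format, of "Suc j"] j by (intro n_growth[OF m_ge2 m_inc _ chain c_pos]) simp_all
  have "a * n 1 + (\<Sum>i\<in>{1..<k}. av i * n (2*i)) + n (2*k) < pseq n s k + 1 * n (2*k)"
    using small n_pos
    by (intro weighted_sum_bound[OF m_ge2 _ m2 n12 chain c_pos _ growth k])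
       (simp_all add: chain_exp_def)
  then show ?thesis by simp
qed

end
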